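(* Let $G_S(s)=\frac{N_S(s)}{D_S(s)}$ and $G_T(s)=\frac{N_T(s)}{D_T(s)}$ be rational transfer functions of two continuous-time, single-input single-output, linear time-invariant systems (the source system and the target system), each written with coprime real polynomials and nonzero numerator. Assume both $G_S$ and $G_T$ are BIBO stable, and assume $G_S$ is minimum-phase. Then there exists a causal, BIBO stable rational transfer function $G_\alpha(s)$ (the transfer map from the source system to the target system) achieving perfect transfer learning, i.e. such that $G_\alpha(s)G_S(s)=G_T(s)$ (equivalently, for every bounded input $d$, feeding the source output $y_s$ with $Y_s(s)=G_S(s)D(s)$ into $G_\alpha$ yields exactly the target output $y_t$ with $Y_t(s)=G_T(s)D(s)$), if and only if the relative degree of $G_S$ is less than or equal to the relative degree of $G_T$. *)

theory Defs
  imports "HOL-Computational_Algebra.Polynomial_Factorial" Complex_Main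
begin

text \<open>A SISO LTI continuous-time rational transfer function G(s) = N(s)/D(s) is represented
  by a pair of real polynomials (N, D), written in lowest terms (coprime) with D nonzero.\<close>
definition rtf :: "real poly \<Rightarrow> real poly \<Rightarrow> bool" where
  "rtf N D \<longleftrightarrow> D \<noteq> 0 \<and> coprime N D"

definition poles :: "real poly \<Rightarrow> complex set" where
  "poles D = {z. poly (map_poly complex_of_real D) z = 0}"

definition zeros :: "real poly \<Rightarrow> complex set" where
  "zeros N = {z. poly (map_poly complex_of_real N) z = 0}"

definition causal_tf :: "real poly \<Rightarrow> real poly \<Rightarrow> bool" where
  "causal_tf N D \<longleftrightarrow> degree N \<le> degree D"

text \<open>BIBO stability of a rational transfer function in lowest terms:
  proper and all poles in the open left half plane.\<close>
definition bibo_stable :: "real poly \<Rightarrow> real poly \<Rightarrow> bool" where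
  "bibo_stable N D \<longleftrightarrow> degree N \<le> degree D \<and> (\<forall>z\<in>poles D. Re z < 0)"

definition minimum_phase :: "real poly \<Rightarrow> real poly \<Rightarrow> bool" where
  "minimum_phase N D \<longleftrightarrow> (\<forall>z\<in>zeros N. Re z < 0)"

definition rel_degree :: "real poly \<Rightarrow> real poly \<Rightarrow> int" where
  "rel_degree N D = int (degree D) - int (degree N)"

end

theory Submission
  imports Defs "HOL-Computational_Algebra.Field_as_Ring"
begin

text \<open>The transfer map has to be \<open>G\<^sub>\<alpha> = G\<^sub>T / G\<^sub>S = (N\<^sub>T D\<^sub>S) / (D\<^sub>T N\<^sub>S)\<close>. Relative degree is
  additive under products of transfer functions, so \<open>G\<^sub>\<alpha>\<close> is proper exactly when
  \<open>rel_degree G\<^sub>S \<le> rel_degree G\<^sub>T\<close>. After cancelling common factors, every pole of \<open>G\<^sub>\<alpha>\<close> is a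
  pole of \<open>G\<^sub>T\<close> or a zero of \<open>G\<^sub>S\<close>, hence lies in the open left half plane by stability of
  \<open>G\<^sub>T\<close> and the minimum-phase property of \<open>G\<^sub>S\<close>.\<close>

lemma map_poly_of_real_add:
  "map_poly of_real (p + q) =
     map_poly of_real p + (map_poly of_real q :: 'a :: real_algebra_1 poly)"
  by (rule poly_eqI) (simp add: coeff_map_poly)

lemma map_poly_of_real_mult:
  "map_poly of_real (p * q) =
     map_poly of_real p * (map_poly of_real q :: 'a :: {real_algebra_1, comm_ring_1} poly)"
  by (induction p) (auto simp: map_poly_pCons map_poly_smult map_poly_of_real_add)

lemma poles_mult: "poles (p * q) = poles p \<union> poles q"
  by (auto simp: poles_def map_poly_of_real_mult)

lemma zeros_eq_poles: "zeros = poles"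
  by (auto simp: zeros_def poles_def)

lemma causal_tf_iff_rel_degree_nonneg: "causal_tf N D \<longleftrightarrow> 0 \<le> rel_degree N D"
  by (simp add: causal_tf_def rel_degree_def)

lemma rel_degree_mult:
  assumes "N\<^sub>1 \<noteq> 0" "N\<^sub>2 \<noteq> 0" "D\<^sub>1 \<noteq> 0" "D\<^sub>2 \<noteq> 0"
  shows "rel_degree (N\<^sub>1 * N\<^sub>2) (D\<^sub>1 * D\<^sub>2) = rel_degree N\<^sub>1 D\<^sub>1 + rel_degree N\<^sub>2 D\<^sub>2"
  using assms by (simp add: rel_degree_def degree_mult_eq)

lemma rel_degree_cancel:
  assumes "g \<noteq> 0" "N \<noteq> 0" "D \<noteq> 0"
  shows "rel_degree (N * g) (D * g) = rel_degree N D"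
  using rel_degree_mult[OF assms(2,1,3,1)] by (simp add: rel_degree_def)

lemma rel_degree_eq_if_cross_mult:
  assumes "N\<^sub>1 * D\<^sub>2 = N\<^sub>2 * D\<^sub>1" "N\<^sub>1 \<noteq> 0" "N\<^sub>2 \<noteq> 0" "D\<^sub>1 \<noteq> 0" "D\<^sub>2 \<noteq> 0"
  shows "rel_degree N\<^sub>1 D\<^sub>1 = rel_degree N\<^sub>2 D\<^sub>2"
proof -
  have "degree N\<^sub>1 + degree D\<^sub>2 = degree N\<^sub>2 + degree D\<^sub>1"
    using arg_cong[OF assms(1), of degree] assms(2-) by (simp add: degree_mult_eq)
  then show ?thesis by (simp add: rel_degree_def)
qed

lemma rel_degree_le_if_causal_factor:
  assumes "Na * N\<^sub>1 * D\<^sub>2 = N\<^sub>2 * Da * D\<^sub>1" "causal_tf Na Da"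
    and "N\<^sub>1 \<noteq> 0" "N\<^sub>2 \<noteq> 0" "D\<^sub>1 \<noteq> 0" "D\<^sub>2 \<noteq> 0" "Da \<noteq> 0"
  shows "rel_degree N\<^sub>1 D\<^sub>1 \<le> rel_degree N\<^sub>2 D\<^sub>2"
proof -
  have "Na \<noteq> 0" using assms by auto
  have "(Na * N\<^sub>1) * D\<^sub>2 = N\<^sub>2 * (Da * D\<^sub>1)" using assms(1) by (simp add: ac_simps)
  then have "rel_degree (Na * N\<^sub>1) (Da * D\<^sub>1) = rel_degree N\<^sub>2 D\<^sub>2"
    using assms \<open>Na \<noteq> 0\<close> by (intro rel_degree_eq_if_cross_mult) auto
  then have "rel_degree Na Da + rel_degree N\<^sub>1 D\<^sub>1 = rel_degree N\<^sub>2 D\<^sub>2"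
    using rel_degree_mult assms \<open>Na \<noteq> 0\<close> by simp
  then show ?thesis using assms(2) by (simp add: causal_tf_iff_rel_degree_nonneg)
qed

lemma lowest_terms_exists:
  assumes "a \<noteq> 0" "b \<noteq> 0"
  obtains N D where "rtf N D" "N * b = a * D" "rel_degree N D = rel_degree a b"
    "poles D \<subseteq> poles b"
proof -
  define g where "g = gcd a b"
  have "g \<noteq> 0" using assms by (simp add: g_def)
  obtain N D where a: "a = N * g" and b: "b = D * g" and "coprime N D"
    using gcd_coprime_exists[of a b] \<open>g \<noteq> 0\<close> unfolding g_def by blast
  have "N \<noteq> 0" "D \<noteq> 0" using assms a b by auto
  show thesis
  proof
    show "rtf N D" using \<open>D \<noteq> 0\<close> \<open>coprime N D\<close> by (simp add: rtf_def)
    show "N * b = a * D" unfolding a b by (simp add: ac_simps)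
    show "rel_degree N D = rel_degree a b"
      unfolding a b using \<open>g \<noteq> 0\<close> \<open>N \<noteq> 0\<close> \<open>D \<noteq> 0\<close> by (simp add: rel_degree_cancel)
    show "poles D \<subseteq> poles b" unfolding b by (simp add: poles_mult)
  qed
qed

theorem theorem1:
  fixes NS DS NT DT :: "real poly"
  assumes "rtf NS DS" and "NS \<noteq> 0"
    and "rtf NT DT" and "NT \<noteq> 0"
    and "bibo_stable NS DS" and "bibo_stable NT DT"
    and "minimum_phase NS DS"
  shows "(\<exists>Na Da. rtf Na Da \<and> causal_tf Na Da \<and> bibo_stable Na Da
              \<and> Na * NS * DT = NT * Da * DS)
         \<longleftrightarrow> rel_degree NS DS \<le> rel_degree NT DT"
proof -
  have "DS \<noteq> 0" "DT \<noteq> 0" using assms(1,3) by (auto simp: rtf_def)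
  show ?thesis
  proof
    assume "\<exists>Na Da. rtf Na Da \<and> causal_tf Na Da \<and> bibo_stable Na Da
              \<and> Na * NS * DT = NT * Da * DS"
    then show "rel_degree NS DS \<le> rel_degree NT DT"
      using assms \<open>DS \<noteq> 0\<close> \<open>DT \<noteq> 0\<close>
      by (auto simp: rtf_def intro: rel_degree_le_if_causal_factor)
  next
    assume "rel_degree NS DS \<le> rel_degree NT DT"
    obtain Na Da where "rtf Na Da" "Na * (DT * NS) = (NT * DS) * Da"
      and "rel_degree Na Da = rel_degree (NT * DS) (DT * NS)" and "poles Da \<subseteq> poles (DT * NS)"
      using lowest_terms_exists[of "NT * DS" "DT * NS"] assms \<open>DS \<noteq> 0\<close> \<open>DT \<noteq> 0\<close> by auto
    moreover have "rel_degree (NT * DS) (DT * NS) = rel_degree NT DT - rel_degree NS DS"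
      using assms \<open>DS \<noteq> 0\<close> \<open>DT \<noteq> 0\<close> by (simp add: rel_degree_def degree_mult_eq)
    moreover have "\<forall>z\<in>poles (DT * NS). Re z < 0"
      using assms(6,7) by (auto simp: poles_mult bibo_stable_def minimum_phase_def zeros_eq_poles)
    ultimately show "\<exists>Na Da. rtf Na Da \<and> causal_tf Na Da \<and> bibo_stable Na Da
              \<and> Na * NS * DT = NT * Da * DS"
      using \<open>rel_degree NS DS \<le> rel_degree NT DT\<close>
      by (intro exI[of _ Na] exI[of _ Da])
        (auto simp: causal_tf_iff_rel_degree_nonneg bibo_stable_def rel_degree_def ac_simps)
  qed
qed

end
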